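(* In the transfer model and with the freeze algorithm $\mathrm{CalcFreeze}$ described in the context, suppose the transaction graph $G$ is acyclic and that no burn transactions occur between the disputed transaction $t_0$ and the freeze time. Then when the algorithm terminates, every edge $t=(a\to b)$ of $G$ satisfies $$ \mathrm{ob}(b,t)\le \mathrm{obsum}(a,t). $$ That is, the obligation passed to $b$ because of $t$ does not exceed the obligations passed to $a$ through transactions into $a$ that occurred before $t$.
   Context: Transfer model. There is a finite set of addresses, each holding a nonnegative token balance. A transaction is a transfer $t=(a\to b)$ of value $\mathrm{val}(t)\ge 0$ from address $a$ to address $b$; it decreases the balance of $a$ by $\mathrm{val}(t)$ and increases the balance of $b$ by $\mathrm{val}(t)$. Transactions are totally ordered in time, and each transaction is valid: the sender's balance never becomes negative. There are no burns, i.e. no operation removes tokens from an address other than a transfer. The disputed transaction is $t_0=(v\to a_0)$ with $s=\mathrm{val}(t_0)$. The freeze happens at a time after $t_0$ and after all transactions considered. For an address $a$, $\mathrm{Bal}(a)$ denotes its balance at the freeze time; no amounts are frozen before this freeze. Transaction graph $G$. Consider the transactions strictly after $t_0$ and before the freeze. $G$ is the directed multigraph whose edges are those transactions $(b\to c)$ for which there is a directed path of such transactions from $a_0$ to $b$ ($b=a_0$ allowed). The vertices are $a_0$ and all endpoints of these edges. Each edge keeps its time and its value $\mathrm{val}$. Algorithm $\mathrm{CalcFreeze}$ (on acyclic $G$): - Let $L$ be a topological order of the vertices of $G$, i.e. for every edge $a\to b$, $a$ precedes $b$. - Initialize $\mathrm{oblig}(a)=0$ for all $a\neq a_0$ and $\mathrm{oblig}(a_0)=s$.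 - For each $a$ in the order $L$: - Set $\tau=\mathrm{oblig}(a)$, $\mathrm{toFreeze}(a)=\min(\tau,\mathrm{Bal}(a))$ and $\tau'=\tau-\mathrm{toFreeze}(a)$. - If $\tau'\le 0$, proceed to the next vertex. - Otherwise, iterate over the outgoing edges $t=(a\to b)$ of $a$ in $G$ in reverse chronological order (most recent first). For each such edge set $\mathrm{ob}(b,t)=\min(\tau',\mathrm{val}(t))$, add $\mathrm{ob}(b,t)$ to $\mathrm{oblig}(b)$, and subtract $\mathrm{ob}(b,t)$ from $\tau'$. Stop iterating over the edges of $a$ as soon as $\tau'\le 0$. - Edges never processed have $\mathrm{ob}(b,t)=0$. Definition of $\mathrm{obsum}$. Set $\mathrm{ob}(a_0,t_0)=s$. For an edge $t=(a\to b)$ of $G$, $\mathrm{obsum}(a,t)$ is the sum of $\mathrm{ob}(a,t')$ over all transactions $t'$ into $a$ that occurred before $t$, where $t'$ ranges over the edges of $G$ with destination $a$ together with $t_0$ if $a=a_0$. *)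

theory Defs
  imports Complex_Main
begin

text \<open>A transaction is a triple (sender, receiver, value). The history is a list of
transactions in chronological order (list index = time). The freeze happens after the
last transaction of the list.\<close>

type_synonym 'a tx = "'a \<times> 'a \<times> real"

definition tsrc :: "'a tx \<Rightarrow> 'a" where "tsrc t = fst t"
definition tdst :: "'a tx \<Rightarrow> 'a" where "tdst t = fst (snd t)"
definition tval :: "'a tx \<Rightarrow> real" where "tval t = snd (snd t)"

definition bal_after :: "('a \<Rightarrow> real) \<Rightarrow> 'a tx list \<Rightarrow> nat \<Rightarrow> 'a \<Rightarrow> real" where
  "bal_after init txs k a =
     init a + (\<Sum>i<k. (if tdst (txs ! i) = a then tval (txs ! i) else 0)
                    - (if tsrc (txs ! i) = a then tval (txs ! i) else 0))"

definition valid_history :: "('a \<Rightarrow> real) \<Rightarrow> 'a tx list \<Rightarrow> bool" where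
  "valid_history init txs \<longleftrightarrow>
     (\<forall>i<length txs. tval (txs ! i) \<ge> 0) \<and>
     (\<forall>k\<le>length txs. \<forall>a. bal_after init txs k a \<ge> 0)"

definition Bal :: "('a \<Rightarrow> real) \<Rightarrow> 'a tx list \<Rightarrow> 'a \<Rightarrow> real" where
  "Bal init txs a = bal_after init txs (length txs) a"

definition after_rel :: "'a tx list \<Rightarrow> nat \<Rightarrow> ('a \<times> 'a) set" where
  "after_rel txs i0 = {(tsrc (txs ! j), tdst (txs ! j)) | j. i0 < j \<and> j < length txs}"

definition G_edges :: "'a tx list \<Rightarrow> nat \<Rightarrow> 'a \<Rightarrow> nat set" where
  "G_edges txs i0 a0 = {j. i0 < j \<and> j < length txs \<and> (a0, tsrc (txs ! j)) \<in> (after_rel txs i0)\<^sup>*}"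

definition G_vertices :: "'a tx list \<Rightarrow> nat \<Rightarrow> 'a \<Rightarrow> 'a set" where
  "G_vertices txs i0 a0 = {a0} \<union> (\<lambda>j. tsrc (txs ! j)) ` G_edges txs i0 a0
                                 \<union> (\<lambda>j. tdst (txs ! j)) ` G_edges txs i0 a0"

definition G_rel :: "'a tx list \<Rightarrow> nat \<Rightarrow> 'a \<Rightarrow> ('a \<times> 'a) set" where
  "G_rel txs i0 a0 = (\<lambda>j. (tsrc (txs ! j), tdst (txs ! j))) ` G_edges txs i0 a0"

definition G_acyclic :: "'a tx list \<Rightarrow> nat \<Rightarrow> 'a \<Rightarrow> bool" where
  "G_acyclic txs i0 a0 \<longleftrightarrow> acyclic (G_rel txs i0 a0)"

definition topo_order :: "'a tx list \<Rightarrow> nat \<Rightarrow> 'a \<Rightarrow> 'a list \<Rightarrow> bool" where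
  "topo_order txs i0 a0 L \<longleftrightarrow>
     distinct L \<and> set L = G_vertices txs i0 a0 \<and>
     (\<forall>j\<in>G_edges txs i0 a0. \<exists>p q. p < q \<and> q < length L \<and>
          L ! p = tsrc (txs ! j) \<and> L ! q = tdst (txs ! j))"

text \<open>Algorithm state: obligations of vertices and obligations ob(b,t) of edges
(indexed by the transaction index of t).\<close>
type_synonym 'a state = "('a \<Rightarrow> real) \<times> (nat \<Rightarrow> real)"

fun distribute :: "'a tx list \<Rightarrow> nat list \<Rightarrow> real \<Rightarrow> 'a state \<Rightarrow> 'a state" where
  "distribute txs [] \<tau> st = st"
| "distribute txs (j # js) \<tau> (oblig, ob) =
     (if \<tau> \<le> 0 then (oblig, ob)
      else (let x = min \<tau> (tval (txs ! j)); b = tdst (txs ! j)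
            in distribute txs js (\<tau> - x) (oblig(b := oblig b + x), ob(j := x))))"

definition out_edges_desc :: "'a tx list \<Rightarrow> nat \<Rightarrow> 'a \<Rightarrow> 'a \<Rightarrow> nat list" where
  "out_edges_desc txs i0 a0 a =
     rev (filter (\<lambda>j. j \<in> G_edges txs i0 a0 \<and> tsrc (txs ! j) = a) [0..<length txs])"

definition process_vertex ::
  "('a \<Rightarrow> real) \<Rightarrow> 'a tx list \<Rightarrow> nat \<Rightarrow> 'a \<Rightarrow> 'a state \<Rightarrow> 'a \<Rightarrow> 'a state" where
  "process_vertex init txs i0 a0 st a =
     (let \<tau> = fst st a;
          toFreeze = min \<tau> (Bal init txs a);
          \<tau>' = \<tau> - toFreeze
      in distribute txs (out_edges_desc txs i0 a0 a) \<tau>' st)"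

text \<open>Run of CalcFreeze along the order L; returns the final (oblig, ob). Edges never
processed keep ob = 0.\<close>
definition calc_freeze ::
  "('a \<Rightarrow> real) \<Rightarrow> 'a tx list \<Rightarrow> nat \<Rightarrow> 'a list \<Rightarrow> 'a state" where
  "calc_freeze init txs i0 L =
     (let a0 = tdst (txs ! i0); s = tval (txs ! i0)
      in foldl (process_vertex init txs i0 a0) ((\<lambda>_. 0)(a0 := s), (\<lambda>_. 0)) L)"

text \<open>obsum(a,t): sum of ob over transactions into a before t (t0 included if a = a0,
with ob(a0,t0) = s).\<close>
definition obsum :: "'a tx list \<Rightarrow> nat \<Rightarrow> (nat \<Rightarrow> real) \<Rightarrow> 'a \<Rightarrow> nat \<Rightarrow> real" where
  "obsum txs i0 ob a j =
     (if a = tdst (txs ! i0) \<and> i0 < j then tval (txs ! i0) else 0) +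
     (\<Sum>j' \<in> {j' \<in> G_edges txs i0 (tdst (txs ! i0)). tdst (txs ! j') = a \<and> j' < j}. ob j')"

end

theory Submission
  imports Defs
begin

text \<open>When CalcFreeze processes the sender a of an edge t, every edge into a has already been
processed (topological order), so the obligation of a is s (if a = a0) plus the obligations of
all edges into a, those before t (together: obsum(a,t)) and those after t.  The edges out of a
are served most recent first, so t receives at most what is left of that obligation after
freezing min(oblig(a), Bal(a)) and serving the outgoing edges later than t.  Since balances never
become negative, Bal(a) is at least the inflow into a after t minus the outflow after t, and the
obligations of the later incoming edges are bounded by their values; the inflow after t therefore
pays for both the later outgoing edges and the later incoming obligations.\<close>

lemma distribute_ob_notin:
  "i \<notin> set js \<Longrightarrow> snd (distribute txs js \<tau> (oblig, ob)) i = ob i"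
  by (induction js arbitrary: \<tau> oblig ob) (auto simp: Let_def)

lemma distribute_oblig:
  assumes "distinct js" and "\<forall>i\<in>set js. ob i = 0"
  shows "fst (distribute txs js \<tau> (oblig, ob)) b =
           oblig b + (\<Sum>i\<in>{i\<in>set js. tdst (txs ! i) = b}. snd (distribute txs js \<tau> (oblig, ob)) i)"
  using assms
proof (induction js arbitrary: \<tau> oblig ob)
  case Nil
  then show ?case by simp
next
  case (Cons j js)
  show ?case
  proof (cases "\<tau> \<le> 0")
    case True
    then show ?thesis using Cons.prems by (simp, intro sum.neutral) auto
  next
    case False
    define x where "x = min \<tau> (tval (txs ! j))"
    define R where "R = distribute txs js (\<tau> - x) (oblig(tdst (txs ! j) := oblig (tdst (txs ! j)) + x), ob(j := x))"
    have run: "distribute txs (j # js) \<tau> (oblig, ob) = R"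
      using False by (simp add: R_def x_def Let_def)
    have j_notin: "j \<notin> set js" using Cons.prems by simp
    have IH: "fst R b = (oblig(tdst (txs ! j) := oblig (tdst (txs ! j)) + x)) b
                          + (\<Sum>i\<in>{i\<in>set js. tdst (txs ! i) = b}. snd R i)"
      unfolding R_def using Cons.prems by (intro Cons.IH) auto
    have Rj: "snd R j = x" unfolding R_def by (simp add: distribute_ob_notin[OF j_notin])
    show ?thesis
    proof (cases "tdst (txs ! j) = b")
      case True
      then have "{i\<in>set (j # js). tdst (txs ! i) = b} = insert j {i\<in>set js. tdst (txs ! i) = b}"
        by auto
      then show ?thesis using run IH Rj True j_notin by simp
    next
      case False
      then have "{i\<in>set (j # js). tdst (txs ! i) = b} = {i\<in>set js. tdst (txs ! i) = b}"
        by auto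
      then show ?thesis using run IH False by simp
    qed
  qed
qed

text \<open>The \<open>max 0\<close> only matters for indices outside the history, where \<open>txs ! i\<close> is unspecified.\<close>

definition ob_bounded :: "'a tx list \<Rightarrow> (nat \<Rightarrow> real) \<Rightarrow> bool" where
  "ob_bounded txs ob \<longleftrightarrow> (\<forall>i. 0 \<le> ob i \<and> ob i \<le> max 0 (tval (txs ! i)))"

lemma distribute_ob_bounded:
  assumes "\<forall>i\<in>set js. 0 \<le> tval (txs ! i)" and "ob_bounded txs ob"
  shows "ob_bounded txs (snd (distribute txs js \<tau> (oblig, ob)))"
  using assms
proof (induction js arbitrary: \<tau> oblig ob)
  case Nil
  then show ?case by simp
next
  case (Cons j js)
  show ?case
  proof (cases "\<tau> \<le> 0")
    case True
    then show ?thesis using Cons.prems by simp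
  next
    case False
    have "ob_bounded txs (ob(j := min \<tau> (tval (txs ! j))))"
      using Cons.prems False unfolding ob_bounded_def by auto
    then show ?thesis using False Cons.prems Cons.IH by (simp add: Let_def)
  qed
qed

lemma distribute_ob_le_remainder:
  assumes "distinct (xs @ j # ys)" and "ob j = 0" and "\<forall>i\<in>set xs. 0 \<le> tval (txs ! i)"
  shows "snd (distribute txs (xs @ j # ys) \<tau> (oblig, ob)) j
           \<le> max 0 (\<tau> - sum_list (map (\<lambda>i. tval (txs ! i)) xs))"
  using assms
proof (induction xs arbitrary: \<tau> oblig ob)
  case Nil
  then have "j \<notin> set ys" by simp
  then show ?case using Nil.prems distribute_ob_notin[of j ys txs] by (simp add: Let_def)
next
  case (Cons k xs)
  show ?case
  proof (cases "\<tau> \<le> 0")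
    case True
    then show ?thesis using Cons.prems by simp
  next
    case False
    define x where "x = min \<tau> (tval (txs ! k))"
    have "k \<noteq> j" using Cons.prems by auto
    then have IH: "snd (distribute txs (xs @ j # ys) (\<tau> - x)
                     (oblig(tdst (txs ! k) := oblig (tdst (txs ! k)) + x), ob(k := x))) j
                   \<le> max 0 (\<tau> - x - sum_list (map (\<lambda>i. tval (txs ! i)) xs))"
      using Cons.prems by (intro Cons.IH) auto
    have "0 \<le> sum_list (map (\<lambda>i. tval (txs ! i)) xs)"
      using Cons.prems by (intro sum_list_nonneg) auto
    then have "max 0 (\<tau> - x - sum_list (map (\<lambda>i. tval (txs ! i)) xs))
                 \<le> max 0 (\<tau> - tval (txs ! k) - sum_list (map (\<lambda>i. tval (txs ! i)) xs))"
      by (auto simp: x_def min_def max_def)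
    from order_trans[OF IH this] False show ?thesis by (simp add: Let_def x_def diff_diff_eq)
  qed
qed

lemma finite_G_edges: "finite (G_edges txs i0 a0)"
  by (rule finite_subset[of _ "{..<length txs}"]) (auto simp: G_edges_def)

lemma set_out_edges_desc:
  "set (out_edges_desc txs i0 a0 a) = {i \<in> G_edges txs i0 a0. tsrc (txs ! i) = a}"
  by (auto simp: out_edges_desc_def G_edges_def)

lemma distinct_out_edges_desc: "distinct (out_edges_desc txs i0 a0 a)"
  by (simp add: out_edges_desc_def)

lemma out_edges_desc_split:
  assumes "j \<in> G_edges txs i0 a0"
  obtains xs ys where "out_edges_desc txs i0 a0 (tsrc (txs ! j)) = xs @ j # ys"
    and "set xs = {k \<in> G_edges txs i0 a0. tsrc (txs ! k) = tsrc (txs ! j) \<and> j < k}"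
proof -
  define Q where "Q = (\<lambda>k. k \<in> G_edges txs i0 a0 \<and> tsrc (txs ! k) = tsrc (txs ! j))"
  have "j < length txs" using assms by (simp add: G_edges_def)
  then have "[0..<length txs] = [0..<j] @ j # [Suc j..<length txs]"
    by (metis less_imp_le_nat upt_conv_Cons upt_add_eq_append le0 le_add_diff_inverse)
  then have "out_edges_desc txs i0 a0 (tsrc (txs ! j))
               = rev (filter Q [Suc j..<length txs]) @ j # rev (filter Q [0..<j])"
    using assms by (simp add: out_edges_desc_def Q_def)
  moreover have "set (rev (filter Q [Suc j..<length txs]))
                   = {k \<in> G_edges txs i0 a0. tsrc (txs ! k) = tsrc (txs ! j) \<and> j < k}"
    by (auto simp: Q_def G_edges_def)
  ultimately show thesis by (rule that)
qed

lemma process_vertex_ob_other: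
  "\<not> (i \<in> G_edges txs i0 a0 \<and> tsrc (txs ! i) = a) \<Longrightarrow>
   snd (process_vertex init txs i0 a0 st a) i = snd st i"
  by (cases st) (simp add: process_vertex_def Let_def distribute_ob_notin set_out_edges_desc)

lemma foldl_process_vertex_ob_other:
  "i \<notin> G_edges txs i0 a0 \<or> tsrc (txs ! i) \<notin> set M \<Longrightarrow>
   snd (foldl (process_vertex init txs i0 a0) st M) i = snd st i"
  by (induction M arbitrary: st) (auto simp: process_vertex_ob_other)

lemma process_vertex_oblig:
  assumes "\<forall>i\<in>G_edges txs i0 a0. tsrc (txs ! i) = a \<longrightarrow> snd st i = 0"
  shows "fst (process_vertex init txs i0 a0 st a) b = fst st b +
           (\<Sum>i\<in>{i\<in>G_edges txs i0 a0. tsrc (txs ! i) = a \<and> tdst (txs ! i) = b}.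
              snd (process_vertex init txs i0 a0 st a) i)"
proof (cases st)
  case (Pair oblig ob)
  have "{i\<in>set (out_edges_desc txs i0 a0 a). tdst (txs ! i) = b}
          = {i\<in>G_edges txs i0 a0. tsrc (txs ! i) = a \<and> tdst (txs ! i) = b}"
    by (auto simp: set_out_edges_desc)
  moreover have "\<forall>i\<in>set (out_edges_desc txs i0 a0 a). ob i = 0"
    using assms Pair by (auto simp: set_out_edges_desc)
  ultimately show ?thesis using Pair
    by (simp add: process_vertex_def Let_def distribute_oblig[OF distinct_out_edges_desc])
qed

lemma foldl_process_vertex_oblig:
  assumes "distinct M" and "\<forall>i\<in>G_edges txs i0 a0. tsrc (txs ! i) \<in> set M \<longrightarrow> snd st i = 0"
  shows "fst (foldl (process_vertex init txs i0 a0) st M) b = fst st b +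
           (\<Sum>i\<in>{i\<in>G_edges txs i0 a0. tsrc (txs ! i) \<in> set M \<and> tdst (txs ! i) = b}.
              snd (foldl (process_vertex init txs i0 a0) st M) i)"
  using assms
proof (induction M arbitrary: st)
  case Nil
  then show ?case by simp
next
  case (Cons c M)
  let ?P = "process_vertex init txs i0 a0" and ?E = "G_edges txs i0 a0"
  let ?in = "\<lambda>A. {i\<in>?E. tsrc (txs ! i) \<in> A \<and> tdst (txs ! i) = b}"
  define st' where "st' = ?P st c"
  define F where "F = foldl ?P st' M"
  have c_notin: "c \<notin> set M" using Cons.prems by simp
  have "snd st' i = 0" if "i \<in> ?E" "tsrc (txs ! i) \<in> set M" for i
  proof -
    have "tsrc (txs ! i) \<noteq> c" using that c_notin by auto
    then have "snd st' i = snd st i" by (simp add: st'_def process_vertex_ob_other)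
    with that Cons.prems show ?thesis by simp
  qed
  then have IH: "fst F b = fst st' b + (\<Sum>i\<in>?in (set M). snd F i)"
    unfolding F_def using Cons.prems by (intro Cons.IH) auto
  have "fst st' b = fst st b + (\<Sum>i\<in>?in {c}. snd st' i)"
    unfolding st'_def using Cons.prems by (simp add: process_vertex_oblig)
  also have "(\<Sum>i\<in>?in {c}. snd st' i) = (\<Sum>i\<in>?in {c}. snd F i)"
    unfolding F_def using c_notin by (intro sum.cong) (auto simp: foldl_process_vertex_ob_other)
  finally have st'b: "fst st' b = fst st b + (\<Sum>i\<in>?in {c}. snd F i)" .
  have "(\<Sum>i\<in>?in (set (c # M)). snd F i) = (\<Sum>i\<in>?in {c} \<union> ?in (set M). snd F i)"
    by (rule sum.cong) auto
  also have "\<dots> = (\<Sum>i\<in>?in {c}. snd F i) + (\<Sum>i\<in>?in (set M). snd F i)"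
    by (rule sum.union_disjoint) (use finite_G_edges[of txs i0 a0] c_notin in auto)
  finally have "(\<Sum>i\<in>?in (set (c # M)). snd F i) = (\<Sum>i\<in>?in {c}. snd F i) + (\<Sum>i\<in>?in (set M). snd F i)" .
  then show ?case using IH st'b by (simp add: F_def st'_def)
qed

lemma foldl_process_vertex_ob_bounded:
  assumes "\<forall>i<length txs. 0 \<le> tval (txs ! i)" and "ob_bounded txs (snd st)"
  shows "ob_bounded txs (snd (foldl (process_vertex init txs i0 a0) st M))"
  using assms(2)
proof (induction M arbitrary: st)
  case Nil
  then show ?case by simp
next
  case (Cons c M)
  have "\<forall>i\<in>set (out_edges_desc txs i0 a0 c). 0 \<le> tval (txs ! i)"
    using assms(1) by (auto simp: set_out_edges_desc G_edges_def)
  then have "ob_bounded txs (snd (process_vertex init txs i0 a0 st c))"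
    using Cons.prems by (cases st) (simp add: process_vertex_def Let_def distribute_ob_bounded)
  then show ?case using Cons.IH by simp
qed

lemma calc_freeze_ob_bounded:
  assumes "valid_history init txs"
  shows "ob_bounded txs (snd (calc_freeze init txs i0 L))"
  using assms unfolding calc_freeze_def Let_def
  by (intro foldl_process_vertex_ob_bounded) (auto simp: valid_history_def ob_bounded_def)

lemma topo_order_in_edge_source:
  assumes "topo_order txs i0 a0 (pre @ a # post)"
    and "i \<in> G_edges txs i0 a0" and "tdst (txs ! i) = a"
  shows "tsrc (txs ! i) \<in> set pre"
proof -
  let ?L = "pre @ a # post"
  obtain p q where pq: "p < q" "q < length ?L" "?L ! p = tsrc (txs ! i)" "?L ! q = a"
    using assms unfolding topo_order_def by blast
  have "distinct ?L" using assms(1) by (simp add: topo_order_def)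
  then have "q = length pre"
    using pq(2,4) nth_eq_iff_index_eq[of ?L q "length pre"] by simp
  then show ?thesis using pq(1,3) by (metis nth_append nth_mem)
qed

lemma topo_order_no_loop:
  assumes "topo_order txs i0 a0 L" and "i \<in> G_edges txs i0 a0"
  shows "tdst (txs ! i) \<noteq> tsrc (txs ! i)"
proof
  assume loop: "tdst (txs ! i) = tsrc (txs ! i)"
  obtain p q where "p < q" "q < length L" "L ! p = tsrc (txs ! i)" "L ! q = tdst (txs ! i)"
    using assms unfolding topo_order_def by blast
  with loop assms(1) show False
    by (metis nth_eq_iff_index_eq order.strict_trans topo_order_def nat_neq_iff)
qed

text \<open>When a is processed, its obligation is already the full incoming obligation \<open>\<tau>\<close>, since
every edge into a has its source earlier in L; the edges into a keep their obligations from then on.\<close>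

lemma calc_freeze_ob_le_remainder:
  fixes init :: "'a \<Rightarrow> real" and txs :: "'a tx list" and i0 j :: nat and L :: "'a list"
  defines "a0 \<equiv> tdst (txs ! i0)"
  assumes topo: "topo_order txs i0 a0 L" and j: "j \<in> G_edges txs i0 a0"
    and nonneg: "\<forall>i<length txs. 0 \<le> tval (txs ! i)"
  defines "a \<equiv> tsrc (txs ! j)" and "ob \<equiv> snd (calc_freeze init txs i0 L)"
  defines "\<tau> \<equiv> (if a = a0 then tval (txs ! i0) else 0)
                 + (\<Sum>i\<in>{i\<in>G_edges txs i0 a0. tdst (txs ! i) = a}. ob i)"
  shows "ob j \<le> max 0 (\<tau> - min \<tau> (Bal init txs a)
                 - (\<Sum>k\<in>{k\<in>G_edges txs i0 a0. tsrc (txs ! k) = a \<and> j < k}. tval (txs ! k)))"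
proof -
  let ?P = "process_vertex init txs i0 a0" and ?E = "G_edges txs i0 a0"
  define st0 :: "'a state" where "st0 = ((\<lambda>_. 0)(a0 := tval (txs ! i0)), (\<lambda>_. 0))"
  have "a \<in> set L"
    using topo j by (auto simp: topo_order_def G_vertices_def a_def)
  then obtain pre post where L: "L = pre @ a # post" by (meson split_list)
  have dist: "distinct (pre @ a # post)" using topo L by (simp add: topo_order_def)
  have in_pre: "tsrc (txs ! i) \<in> set pre" if "i \<in> ?E" "tdst (txs ! i) = a" for i
    using topo L that by (simp add: topo_order_in_edge_source)
  define st1 where "st1 = foldl ?P st0 pre"
  have ob: "ob = snd (foldl ?P (?P st1 a) post)"
    by (simp add: ob_def calc_freeze_def Let_def a0_def L st1_def st0_def)
  have ob_pre: "ob i = snd st1 i" if "tsrc (txs ! i) \<in> set pre" for i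
  proof -
    have "tsrc (txs ! i) \<notin> set post" "tsrc (txs ! i) \<noteq> a" using that dist by auto
    then show ?thesis by (simp add: ob foldl_process_vertex_ob_other process_vertex_ob_other)
  qed
  have "fst st1 a = fst st0 a + (\<Sum>i\<in>{i\<in>?E. tsrc (txs ! i) \<in> set pre \<and> tdst (txs ! i) = a}. snd st1 i)"
    unfolding st1_def using dist by (intro foldl_process_vertex_oblig) (auto simp: st0_def)
  also have "{i\<in>?E. tsrc (txs ! i) \<in> set pre \<and> tdst (txs ! i) = a} = {i\<in>?E. tdst (txs ! i) = a}"
    using in_pre by auto
  finally have "fst st1 a = \<tau>"
    unfolding \<tau>_def using in_pre ob_pre by (auto simp: st0_def intro!: sum.cong)
  obtain xs ys where out: "out_edges_desc txs i0 a0 a = xs @ j # ys"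
    and xs: "set xs = {k\<in>?E. tsrc (txs ! k) = a \<and> j < k}"
    using out_edges_desc_split[OF j] unfolding a_def by blast
  have "ob j = snd (?P st1 a) j"
    using dist unfolding ob by (simp add: foldl_process_vertex_ob_other a_def)
  also have "\<dots> = snd (distribute txs (xs @ j # ys) (\<tau> - min \<tau> (Bal init txs a)) (fst st1, snd st1)) j"
    using \<open>fst st1 a = \<tau>\<close> by (simp add: process_vertex_def out)
  also have "\<dots> \<le> max 0 (\<tau> - min \<tau> (Bal init txs a) - sum_list (map (\<lambda>i. tval (txs ! i)) xs))"
  proof (rule distribute_ob_le_remainder)
    show "distinct (xs @ j # ys)" using distinct_out_edges_desc[of txs i0 a0 a] out by simp
    show "snd st1 j = 0" using dist by (simp add: st1_def foldl_process_vertex_ob_other a_def st0_def)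
    show "\<forall>i\<in>set xs. 0 \<le> tval (txs ! i)" using xs nonneg by (auto simp: G_edges_def)
  qed
  also have "sum_list (map (\<lambda>i. tval (txs ! i)) xs) = (\<Sum>k\<in>{k\<in>?E. tsrc (txs ! k) = a \<and> j < k}. tval (txs ! k))"
    using distinct_out_edges_desc[of txs i0 a0 a] out xs by (simp add: sum_list_distinct_conv_sum_set)
  finally show ?thesis .
qed

lemma Bal_ge_later_net_inflow:
  assumes "valid_history init txs" and "k \<le> length txs"
  shows "(\<Sum>i\<in>{k..<length txs}. if tdst (txs ! i) = a then tval (txs ! i) else 0)
         - (\<Sum>i\<in>{k..<length txs}. if tsrc (txs ! i) = a then tval (txs ! i) else 0)
         \<le> Bal init txs a"
proof -
  define net where "net = (\<lambda>i. (if tdst (txs ! i) = a then tval (txs ! i) else 0)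
                              - (if tsrc (txs ! i) = a then tval (txs ! i) else 0))"
  have "Bal init txs a = bal_after init txs k a + (\<Sum>i\<in>{k..<length txs}. net i)"
    using sum.atLeastLessThan_concat[of 0 k "length txs" net] assms(2)
    by (simp add: Bal_def bal_after_def net_def atLeast0LessThan)
  moreover have "0 \<le> bal_after init txs k a"
    using assms by (simp add: valid_history_def)
  ultimately show ?thesis by (simp add: net_def sum_subtractf)
qed

lemma later_in_edges_ob_le_inflow:
  assumes "ob_bounded txs ob" and "\<forall>i<length txs. 0 \<le> tval (txs ! i)"
  shows "(\<Sum>i\<in>{i\<in>G_edges txs i0 a0. tdst (txs ! i) = a \<and> j < i}. ob i)
         \<le> (\<Sum>i\<in>{Suc j..<length txs}. if tdst (txs ! i) = a then tval (txs ! i) else 0)"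
proof -
  have ob_le: "ob i \<le> tval (txs ! i)" if "i < length txs" for i
    using assms that unfolding ob_bounded_def by (metis max.absorb2)
  have "(\<Sum>i\<in>{i\<in>G_edges txs i0 a0. tdst (txs ! i) = a \<and> j < i}. ob i)
          = (\<Sum>i\<in>{i\<in>{Suc j..<length txs}. i \<in> G_edges txs i0 a0 \<and> tdst (txs ! i) = a}. ob i)"
    by (rule sum.cong) (auto simp: G_edges_def)
  also have "\<dots> = (\<Sum>i\<in>{Suc j..<length txs}. if i \<in> G_edges txs i0 a0 \<and> tdst (txs ! i) = a then ob i else 0)"
    by (rule sum.inter_filter) simp
  also have "\<dots> \<le> (\<Sum>i\<in>{Suc j..<length txs}. if tdst (txs ! i) = a then tval (txs ! i) else 0)"
    using ob_le assms(2) by (intro sum_mono) auto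
  finally show ?thesis .
qed

text \<open>Every transaction sent by a after an edge of G out of a is itself an edge of G, because a is
reachable from a0 and G contains all transactions after t0 leaving reachable addresses.\<close>

lemma later_out_edges_tval_eq_outflow:
  assumes "j \<in> G_edges txs i0 a0"
  shows "(\<Sum>k\<in>{k\<in>G_edges txs i0 a0. tsrc (txs ! k) = tsrc (txs ! j) \<and> j < k}. tval (txs ! k))
         = (\<Sum>k\<in>{Suc j..<length txs}. if tsrc (txs ! k) = tsrc (txs ! j) then tval (txs ! k) else 0)"
proof -
  have "(\<Sum>k\<in>{k\<in>G_edges txs i0 a0. tsrc (txs ! k) = tsrc (txs ! j) \<and> j < k}. tval (txs ! k))
          = (\<Sum>k\<in>{k\<in>{Suc j..<length txs}. tsrc (txs ! k) = tsrc (txs ! j)}. tval (txs ! k))"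
    by (rule sum.cong) (use assms in \<open>auto simp: G_edges_def\<close>)
  also have "\<dots> = (\<Sum>k\<in>{Suc j..<length txs}. if tsrc (txs ! k) = tsrc (txs ! j) then tval (txs ! k) else 0)"
    by (rule sum.inter_filter) simp
  finally show ?thesis .
qed

lemma in_edges_oblig_eq_obsum_add_later:
  assumes "topo_order txs i0 (tdst (txs ! i0)) L" and "j \<in> G_edges txs i0 (tdst (txs ! i0))"
  shows "(if tsrc (txs ! j) = tdst (txs ! i0) then tval (txs ! i0) else 0)
           + (\<Sum>i\<in>{i\<in>G_edges txs i0 (tdst (txs ! i0)). tdst (txs ! i) = tsrc (txs ! j)}. ob i)
         = obsum txs i0 ob (tsrc (txs ! j)) j
           + (\<Sum>i\<in>{i\<in>G_edges txs i0 (tdst (txs ! i0)). tdst (txs ! i) = tsrc (txs ! j) \<and> j < i}. ob i)"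
proof -
  let ?in = "\<lambda>P. {i\<in>G_edges txs i0 (tdst (txs ! i0)). tdst (txs ! i) = tsrc (txs ! j) \<and> P i}"
  have "j \<notin> ?in (\<lambda>_. True)" using topo_order_no_loop[OF assms] by simp
  then have "?in (\<lambda>_. True) = ?in (\<lambda>i. i < j) \<union> ?in (\<lambda>i. j < i)"
    by (auto simp: not_less le_less)
  then have "(\<Sum>i\<in>?in (\<lambda>_. True). ob i) = (\<Sum>i\<in>?in (\<lambda>i. i < j) \<union> ?in (\<lambda>i. j < i). ob i)"
    by (rule sum.cong) simp
  also have "\<dots> = (\<Sum>i\<in>?in (\<lambda>i. i < j). ob i) + (\<Sum>i\<in>?in (\<lambda>i. j < i). ob i)"
    by (rule sum.union_disjoint) (use finite_G_edges[of txs i0] in auto)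
  finally show ?thesis
    using assms(2) by (simp add: obsum_def G_edges_def add.assoc)
qed

lemma obsum_nonneg:
  assumes "\<forall>i. 0 \<le> ob i" and "0 \<le> tval (txs ! i0)"
  shows "0 \<le> obsum txs i0 ob a j"
  using assms by (simp add: obsum_def sum_nonneg)

theorem theoremA2:
  fixes init :: "'a \<Rightarrow> real" and txs :: "'a tx list" and i0 :: nat and L :: "'a list"
  assumes "valid_history init txs"
    and "i0 < length txs"
    and "G_acyclic txs i0 (tdst (txs ! i0))"
    and "topo_order txs i0 (tdst (txs ! i0)) L"
    and "j \<in> G_edges txs i0 (tdst (txs ! i0))"
  shows "snd (calc_freeze init txs i0 L) j
           \<le> obsum txs i0 (snd (calc_freeze init txs i0 L)) (tsrc (txs ! j)) j"
proof -
  let ?a = "tsrc (txs ! j)" and ?ob = "snd (calc_freeze init txs i0 L)"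
  define later_in where
    "later_in = (\<Sum>i\<in>{i\<in>G_edges txs i0 (tdst (txs ! i0)). tdst (txs ! i) = ?a \<and> j < i}. ?ob i)"
  define inflow where "inflow = (\<Sum>i\<in>{Suc j..<length txs}. if tdst (txs ! i) = ?a then tval (txs ! i) else 0)"
  define outflow where "outflow = (\<Sum>i\<in>{Suc j..<length txs}. if tsrc (txs ! i) = ?a then tval (txs ! i) else 0)"
  have nonneg: "\<forall>i<length txs. 0 \<le> tval (txs ! i)" using assms(1) by (simp add: valid_history_def)
  have bounded: "ob_bounded txs ?ob" using assms(1) by (rule calc_freeze_ob_bounded)
  let ?obsum = "obsum txs i0 ?ob ?a j"
  have "?ob j \<le> max 0 (?obsum + later_in - min (?obsum + later_in) (Bal init txs ?a) - outflow)"
    using calc_freeze_ob_le_remainder[where init = init, OF assms(4,5) nonneg]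
    unfolding in_edges_oblig_eq_obsum_add_later[OF assms(4,5)] later_out_edges_tval_eq_outflow[OF assms(5)]
      later_in_def outflow_def .
  moreover have "later_in \<le> inflow"
    unfolding later_in_def inflow_def by (rule later_in_edges_ob_le_inflow[OF bounded nonneg])
  moreover have "inflow - outflow \<le> Bal init txs ?a"
    unfolding inflow_def outflow_def using assms(1,5) by (simp add: Bal_ge_later_net_inflow G_edges_def)
  moreover have "0 \<le> outflow" unfolding outflow_def using nonneg by (intro sum_nonneg) auto
  moreover have "0 \<le> ?obsum"
    using bounded nonneg assms(2) by (intro obsum_nonneg) (auto simp: ob_bounded_def)
  ultimately show ?thesis by linarith
qed

end
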